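(* Let $\Sigma\in\mathbb{R}^{n\times n}$ be symmetric positive definite, let $C_0\in\mathbb{R}^{n\times n}$ be symmetric positive semidefinite, and define $C_{i+1}=\Sigma-\Sigma(C_i+\Sigma)^{-1}\Sigma$ for $i\ge0$. If $\tilde w\ne0$ and $\tilde\delta_i$ satisfy $C_i\tilde w=\tilde\delta_i\Sigma\tilde w$, then $C_{i+1}\tilde w=\tilde\delta_{i+1}\Sigma\tilde w$ with $\tilde\delta_{i+1}=\tilde\delta_i/(1+\tilde\delta_i)$.
   Context: In the paper $C_0=H\Gamma_0H^\top$, where $\Gamma_0$ is the empirical covariance of the initial EKI ensemble and $H$ is the linear observation operator; $C_i$ is an idealized observation-space covariance for stochastic EKI. *)

theory Defs
  imports "HOL-Analysis.Analysis"
begin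

definition symmetric_matrix :: "real^'n^'n \<Rightarrow> bool" where
  "symmetric_matrix A \<longleftrightarrow> transpose A = A"

definition pos_def_matrix :: "real^'n^'n \<Rightarrow> bool" where
  "pos_def_matrix A \<longleftrightarrow> symmetric_matrix A \<and> (\<forall>x. x \<noteq> 0 \<longrightarrow> x \<bullet> (A *v x) > 0)"

definition pos_semidef_matrix :: "real^'n^'n \<Rightarrow> bool" where
  "pos_semidef_matrix A \<longleftrightarrow> symmetric_matrix A \<and> (\<forall>x. x \<bullet> (A *v x) \<ge> 0)"

end

theory Submission
  imports Defs
begin

text \<open>Write \<open>C' = \<Sigma> - \<Sigma> (C + \<Sigma>)\<^sup>-\<^sup>1 \<Sigma>\<close>. With \<open>y = (C + \<Sigma>)\<^sup>-\<^sup>1 \<Sigma> x\<close> one has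
  \<open>x \<bullet> C' x = (x - y) \<bullet> \<Sigma> (x - y) + y \<bullet> C y\<close>, so the update keeps the quadratic form
  nonnegative; by induction every \<open>C\<^sub>i + \<Sigma>\<close> is positive definite, hence invertible.
  Then \<open>(C\<^sub>i + \<Sigma>) w = (1 + \<delta>) \<Sigma> w\<close> gives \<open>(C\<^sub>i + \<Sigma>)\<^sup>-\<^sup>1 \<Sigma> w = w / (1 + \<delta>)\<close>, and
  \<open>C\<^sub>i\<^sub>+\<^sub>1 w = (1 - 1 / (1 + \<delta>)) \<Sigma> w\<close>.\<close>

definition riccati_update :: "'a::field^'n^'n \<Rightarrow> 'a^'n^'n \<Rightarrow> 'a^'n^'n" where
  "riccati_update S C = S - S ** matrix_inv (C + S) ** S"

lemma matrix_inv_right_left: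
  fixes A :: "'a::semiring_1^'n^'n"
  assumes "invertible A"
  shows "A ** matrix_inv A = mat 1" and "matrix_inv A ** A = mat 1"
  using someI_ex[OF assms[unfolded invertible_def]] unfolding matrix_inv_def by blast+

lemma invertible_if_quadratic_form_pos:
  fixes M :: "real^'n^'n"
  assumes "\<And>x. x \<noteq> 0 \<Longrightarrow> 0 < x \<bullet> (M *v x)"
  shows "invertible M"
proof -
  have "\<forall>x. M *v x = 0 \<longrightarrow> x = 0"
    using assms by (metis inner_zero_right less_irrefl)
  then show ?thesis
    using matrix_left_invertible_ker invertible_left_inverse by blast
qed

lemma invertible_nonneg_form_plus_pos_def:
  fixes S C :: "real^'n^'n"
  assumes "pos_def_matrix S" and "\<And>x. 0 \<le> x \<bullet> (C *v x)"
  shows "invertible (C + S)"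
proof (rule invertible_if_quadratic_form_pos)
  fix x :: "real^'n"
  assume "x \<noteq> 0"
  then have "0 < x \<bullet> (S *v x)"
    using assms(1) unfolding pos_def_matrix_def by blast
  then show "0 < x \<bullet> ((C + S) *v x)"
    using assms(2)[of x] by (simp add: matrix_vector_mult_add_rdistrib inner_add_right)
qed

lemma symmetric_matrix_inner_commute:
  fixes S :: "real^'n^'n"
  assumes "symmetric_matrix S"
  shows "x \<bullet> (S *v y) = y \<bullet> (S *v x)"
proof -
  have "x \<bullet> (S *v y) = (transpose S *v x) \<bullet> y"
    by (metis dot_lmul_matrix transpose_transpose vector_transpose_matrix)
  then show ?thesis
    using assms unfolding symmetric_matrix_def by (simp add: inner_commute)
qed

lemma riccati_update_quadratic_form:
  fixes S C :: "real^'n^'n" and x :: "real^'n"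
  assumes "symmetric_matrix S" and "invertible (C + S)"
  defines "y \<equiv> matrix_inv (C + S) *v (S *v x)"
  shows "x \<bullet> (riccati_update S C *v x) = (x - y) \<bullet> (S *v (x - y)) + y \<bullet> (C *v y)"
proof -
  have "(C + S) *v y = S *v x"
    unfolding y_def by (simp add: matrix_vector_mul_assoc matrix_mul_assoc
        matrix_inv_right_left(1)[OF assms(2)])
  then have "y \<bullet> (S *v x) = y \<bullet> (C *v y) + y \<bullet> (S *v y)"
    by (metis inner_add_right matrix_vector_mult_add_rdistrib)
  moreover have "riccati_update S C *v x = S *v x - S *v y"
    unfolding riccati_update_def y_def
    by (simp add: matrix_vector_mult_diff_rdistrib matrix_vector_mul_assoc matrix_mul_assoc)
  moreover have "x \<bullet> (S *v y) = y \<bullet> (S *v x)"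
    using symmetric_matrix_inner_commute[OF assms(1)] .
  ultimately show ?thesis
    by (simp add: matrix_vector_mult_diff_distrib inner_diff_left inner_diff_right)
qed

lemma riccati_update_nonneg_form:
  fixes S C :: "real^'n^'n"
  assumes S: "pos_def_matrix S" and C: "\<And>x. 0 \<le> x \<bullet> (C *v x)"
  shows "0 \<le> x \<bullet> (riccati_update S C *v x)"
proof -
  have "0 \<le> z \<bullet> (S *v z)" for z
    using S unfolding pos_def_matrix_def by (metis inner_zero_left order.strict_implies_order order_refl)
  moreover have "symmetric_matrix S"
    using S unfolding pos_def_matrix_def by blast
  ultimately show ?thesis
    using riccati_update_quadratic_form invertible_nonneg_form_plus_pos_def[OF S C] C
    by (metis add_nonneg_nonneg)
qed

lemma riccati_update_generalized_eigenvector: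
  fixes S C :: "'a::field^'n^'n"
  assumes inv: "invertible (C + S)" and "w \<noteq> 0" and eig: "C *v w = \<delta> *s (S *v w)"
  shows "riccati_update S C *v w = (\<delta> / (1 + \<delta>)) *s (S *v w)"
proof -
  let ?N = "matrix_inv (C + S)"
  have sum_eig: "(C + S) *v w = (1 + \<delta>) *s (S *v w)"
    using eig by (simp add: matrix_vector_mult_add_rdistrib vector_sadd_rdistrib)
  have w_eq: "w = (1 + \<delta>) *s (?N *v (S *v w))"
    by (metis sum_eig matrix_inv_right_left(2)[OF inv] matrix_vector_mul_assoc
        matrix_vector_mul_lid vector_scalar_commute)
  have "1 + \<delta> \<noteq> 0"
    using w_eq \<open>w \<noteq> 0\<close> by force
  then have "inverse (1 + \<delta>) * (1 + \<delta>) = 1"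
    by simp
  then have NSw: "?N *v (S *v w) = inverse (1 + \<delta>) *s w"
    using arg_cong[OF w_eq, of "(*s) (inverse (1 + \<delta>))"]
    by (simp only: vector_smult_assoc vector_smult_lid)
  have "riccati_update S C *v w = S *v w - S *v (?N *v (S *v w))"
    unfolding riccati_update_def
    by (simp add: matrix_vector_mult_diff_rdistrib matrix_vector_mul_assoc matrix_mul_assoc)
  also have "\<dots> = (1 - inverse (1 + \<delta>)) *s (S *v w)"
    by (simp add: NSw vector_scalar_commute vector_sub_rdistrib)
  also have "1 - inverse (1 + \<delta>) = \<delta> / (1 + \<delta>)"
    using \<open>1 + \<delta> \<noteq> 0\<close> by (simp add: field_simps)
  finally show ?thesis .
qed

theorem proposition4p2:
  fixes Sigma :: "real^'n^'n" and C :: "nat \<Rightarrow> real^'n^'n"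
    and w :: "real^'n" and i :: nat and \<delta> :: real
  assumes "pos_def_matrix Sigma"
    and "pos_semidef_matrix (C 0)"
    and "\<And>j. C (Suc j) = Sigma - Sigma ** matrix_inv (C j + Sigma) ** Sigma"
    and "w \<noteq> 0"
    and "C i *v w = \<delta> *s (Sigma *v w)"
  shows "C (Suc i) *v w = (\<delta> / (1 + \<delta>)) *s (Sigma *v w)"
proof -
  have step: "C (Suc j) = riccati_update Sigma (C j)" for j
    using assms(3) unfolding riccati_update_def .
  have nonneg: "0 \<le> x \<bullet> (C j *v x)" for j x
  proof (induction j arbitrary: x)
    case 0
    then show ?case using assms(2) unfolding pos_semidef_matrix_def by blast
  next
    case (Suc j)
    then show ?case using riccati_update_nonneg_form[OF assms(1)] step by metis
  qed
  have "invertible (C i + Sigma)"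
    using invertible_nonneg_form_plus_pos_def[OF assms(1) nonneg] .
  then show ?thesis
    using riccati_update_generalized_eigenvector assms(4,5) step by metis
qed

end
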